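(* Let $\mathcal{LS}_{\mathfrak{A}_2}$ be the operad (variety) of left-symmetric algebras over a field of characteristic $0$ satisfying the identity $a(bc)+b(ac)+a(cb)+c(ab)+b(ca)+c(ba)=0$. Its Koszul dual operad $\mathcal{LS}_{\mathfrak{A}_2}^{(!)}$ is the operad of alternative algebras satisfying the identity $(ab)c=(ba)c$.
   Context: A left-symmetric algebra is an algebra whose associator $(a,b,c)=(ab)c-a(bc)$ satisfies $(a,b,c)=(b,a,c)$. An algebra is alternative if $(a,a,b)=0=(a,b,b)$. The Koszul dual of a binary quadratic operad is taken in the sense of Ginzburg–Kapranov; equivalently, $\mathcal{P}^{(!)}$ is the quadratic operad whose algebras $U$ are defined by exactly those degree-3 identities making $S\otimes U$, with product $(a\otimes u)(b\otimes v)=ab\otimes uv$, Lie-admissible for every $\mathcal{P}$-algebra $S$. *)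

theory Defs
  imports Main HOL.Vector_Spaces "HOL-Library.Function_Algebras"
begin

definition is_algebra :: "('k::field \<Rightarrow> 'a::ab_group_add \<Rightarrow> 'a) \<Rightarrow> ('a \<Rightarrow> 'a \<Rightarrow> 'a) \<Rightarrow> bool" where
  "is_algebra sc m \<longleftrightarrow> vector_space sc \<and>
     (\<forall>x y z. m (x + y) z = m x z + m y z) \<and>
     (\<forall>x y z. m x (y + z) = m x y + m x z) \<and>
     (\<forall>c x y. m (sc c x) y = sc c (m x y)) \<and>
     (\<forall>c x y. m x (sc c y) = sc c (m x y))"

definition assoc :: "('a::ab_group_add \<Rightarrow> 'a \<Rightarrow> 'a) \<Rightarrow> 'a \<Rightarrow> 'a \<Rightarrow> 'a \<Rightarrow> 'a" where
  "assoc m a b c = m (m a b) c - m a (m b c)"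

definition left_symmetric :: "('a::ab_group_add \<Rightarrow> 'a \<Rightarrow> 'a) \<Rightarrow> bool" where
  "left_symmetric m \<longleftrightarrow> (\<forall>a b c. assoc m a b c = assoc m b a c)"

definition A2_identity :: "('a::ab_group_add \<Rightarrow> 'a \<Rightarrow> 'a) \<Rightarrow> bool" where
  "A2_identity m \<longleftrightarrow> (\<forall>a b c.
     m a (m b c) + m b (m a c) + m a (m c b) + m c (m a b) + m b (m c a) + m c (m b a) = 0)"

definition LS_A2 :: "('a::ab_group_add \<Rightarrow> 'a \<Rightarrow> 'a) \<Rightarrow> bool" where
  "LS_A2 m \<longleftrightarrow> left_symmetric m \<and> A2_identity m"

definition alternative :: "('a::ab_group_add \<Rightarrow> 'a \<Rightarrow> 'a) \<Rightarrow> bool" where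
  "alternative m \<longleftrightarrow> (\<forall>a b. assoc m a a b = 0 \<and> assoc m a b b = 0)"

definition left_comm_id :: "('a::ab_group_add \<Rightarrow> 'a \<Rightarrow> 'a) \<Rightarrow> bool" where
  "left_comm_id m \<longleftrightarrow> (\<forall>a b c. m (m a b) c = m (m b a) c)"

text \<open>Elements of S \<otimes> U are represented by formal finite sums of pure tensors
  (lists of pairs (s,u) standing for the sum of s \<otimes> u). Over a field, an element of
  S \<otimes> U is zero iff every 'k-valued bilinear form on S \<times> U annihilates it.\<close>

definition bilinear_form :: "('k::field \<Rightarrow> 's::ab_group_add \<Rightarrow> 's) \<Rightarrow> ('k \<Rightarrow> 'u::ab_group_add \<Rightarrow> 'u)
    \<Rightarrow> ('s \<Rightarrow> 'u \<Rightarrow> 'k) \<Rightarrow> bool" where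
  "bilinear_form scS scU \<beta> \<longleftrightarrow>
     (\<forall>s1 s2 u. \<beta> (s1 + s2) u = \<beta> s1 u + \<beta> s2 u) \<and>
     (\<forall>s u1 u2. \<beta> s (u1 + u2) = \<beta> s u1 + \<beta> s u2) \<and>
     (\<forall>c s u. \<beta> (scS c s) u = c * \<beta> s u) \<and>
     (\<forall>c s u. \<beta> s (scU c u) = c * \<beta> s u)"

definition tensor_zero :: "('k::field \<Rightarrow> 's::ab_group_add \<Rightarrow> 's) \<Rightarrow> ('k \<Rightarrow> 'u::ab_group_add \<Rightarrow> 'u)
    \<Rightarrow> ('s \<times> 'u) list \<Rightarrow> bool" where
  "tensor_zero scS scU xs \<longleftrightarrow>
     (\<forall>\<beta>. bilinear_form scS scU \<beta> \<longrightarrow> (\<Sum>(s, u)\<leftarrow>xs. \<beta> s u) = 0)"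

definition tprod :: "('s \<Rightarrow> 's \<Rightarrow> 's) \<Rightarrow> ('u \<Rightarrow> 'u \<Rightarrow> 'u)
    \<Rightarrow> ('s \<times> 'u) list \<Rightarrow> ('s \<times> 'u) list \<Rightarrow> ('s \<times> 'u) list" where
  "tprod mS mU xs ys = [(mS s t, mU u v). (s, u) \<leftarrow> xs, (t, v) \<leftarrow> ys]"

definition tneg :: "('s::ab_group_add \<times> 'u) list \<Rightarrow> ('s \<times> 'u) list" where
  "tneg xs = map (\<lambda>(s, u). (- s, u)) xs"

definition tcomm :: "('s::ab_group_add \<Rightarrow> 's \<Rightarrow> 's) \<Rightarrow> ('u \<Rightarrow> 'u \<Rightarrow> 'u)
    \<Rightarrow> ('s \<times> 'u) list \<Rightarrow> ('s \<times> 'u) list \<Rightarrow> ('s \<times> 'u) list" where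
  "tcomm mS mU xs ys = tprod mS mU xs ys @ tneg (tprod mS mU ys xs)"

definition tensor_Lie_admissible ::
  "('k::field \<Rightarrow> 's::ab_group_add \<Rightarrow> 's) \<Rightarrow> ('s \<Rightarrow> 's \<Rightarrow> 's)
   \<Rightarrow> ('k \<Rightarrow> 'u::ab_group_add \<Rightarrow> 'u) \<Rightarrow> ('u \<Rightarrow> 'u \<Rightarrow> 'u) \<Rightarrow> bool" where
  "tensor_Lie_admissible scS mS scU mU \<longleftrightarrow>
     (\<forall>xs ys zs. tensor_zero scS scU
        (tcomm mS mU (tcomm mS mU xs ys) zs @
         tcomm mS mU (tcomm mS mU ys zs) xs @
         tcomm mS mU (tcomm mS mU zs xs) ys))"

text \<open>U belongs to the Koszul dual variety of a class P (over carrier type 's)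
  iff S \<otimes> U is Lie-admissible for every P-algebra S.\<close>

end

theory Submission
  imports Defs
begin

(*
  By trilinearity it suffices to check the Jacobi identity of the commutator of S \<otimes> U on pure
  tensors a \<otimes> u, b \<otimes> v, c \<otimes> w. There the Jacobi sum is the signed sum, over the simultaneous
  permutations (x,y,z; p,q,r) of (a,b,c; u,v,w), of (xy)z \<otimes> (pq)r - x(yz) \<otimes> p(qr), and writing
  each term as (x,y,z) \<otimes> (pq)r + x(yz) \<otimes> (p,q,r) splits it in two. If U is alternative with
  (ab)c = (ba)c, the associator of U is alternating, so the second part equals
  (\<Sum> x(yz)) \<otimes> (u,v,w), which the A2 identity kills; in the first part the terms for
  (x,y,z; p,q,r) and (y,x,z; q,p,r) cancel by left symmetry of S and (pq)r = (qp)r in U.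

  Conversely, three LS_A2-algebra structures on sequences, with structure constants supported on
  the unit sequences e0, ..., e6, are chosen so that the e6-coordinate of the Jacobi sum of
  e0 \<otimes> u, e1 \<otimes> v, e2 \<otimes> w is (uv)w - (vu)w, (u,v,w) + (v,u,w) and (u,v,w) + (u,w,v)
  respectively. Since linear functionals separate the points of U and 2 is invertible, U then
  satisfies (ab)c = (ba)c and is alternative.
*)

lemma is_algebra_additive:
  assumes "is_algebra sc m"
  shows "additive (m x)" "additive (\<lambda>x. m x y)"
  using assms unfolding is_algebra_def by (auto intro: additive.intro)

lemma bilinear_form_additive:
  assumes "bilinear_form scS scU \<beta>"
  shows "additive (\<beta> s)" "additive (\<lambda>s. \<beta> s u)"
  using assms unfolding bilinear_form_def by (auto intro: additive.intro)

lemma alternative_assoc_antisym: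
  assumes "\<And>x. additive (m x)" "\<And>y. additive (\<lambda>x. m x y)" "alternative m"
  shows "assoc m y x z = - assoc m x y z" "assoc m x z y = - assoc m x y z"
proof -
  have zero: "assoc m a a b = 0" "assoc m a b b = 0" for a b
    using assms(3) unfolding alternative_def by auto
  note add = additive.add[OF assms(1)] additive.add[OF assms(2)]
  have "assoc m (x + y) (x + y) z = assoc m x x z + assoc m y y z + assoc m x y z + assoc m y x z"
    unfolding assoc_def by (simp add: add algebra_simps)
  then show "assoc m y x z = - assoc m x y z"
    using zero by (simp add: eq_neg_iff_add_eq_0 add.commute)
  have "assoc m x (y + z) (y + z) = assoc m x y y + assoc m x z z + assoc m x y z + assoc m x z y"
    unfolding assoc_def by (simp add: add algebra_simps)
  then show "assoc m x z y = - assoc m x y z"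
    using zero by (simp add: eq_neg_iff_add_eq_0 add.commute)
qed

lemma biadditive_assoc_split:
  assumes "\<And>s. additive (\<beta> s)" "\<And>u. additive (\<lambda>s. \<beta> s u)"
  shows "\<beta> (mS (mS a b) c) (mU (mU u v) w) - \<beta> (mS a (mS b c)) (mU u (mU v w))
       = \<beta> (assoc mS a b c) (mU (mU u v) w) + \<beta> (mS a (mS b c)) (assoc mU u v w)"
  unfolding assoc_def additive.diff[OF assms(1)] additive.diff[OF assms(2)] by simp

lemma sum_list_concat: "(\<Sum>x\<leftarrow>concat xss. f x) = (\<Sum>xs\<leftarrow>xss. \<Sum>x\<leftarrow>xs. f x :: 'a::monoid_add)"
  by (induct xss) simp_all

lemma sum_list_swap:
  "(\<Sum>x\<leftarrow>xs. \<Sum>y\<leftarrow>ys. f x y) = (\<Sum>y\<leftarrow>ys. \<Sum>x\<leftarrow>xs. f x y :: 'a::comm_monoid_add)"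
  by (induct xs) (simp_all add: sum_list_addf)

lemma sum_list_uminus: "(\<Sum>x\<leftarrow>xs. - f x) = - (\<Sum>x\<leftarrow>xs. f x :: 'a::ab_group_add)"
  by (induct xs) simp_all

lemma sum_list_tprod:
  "(\<Sum>p\<leftarrow>tprod mS mU xs ys. h p) =
   (\<Sum>p\<leftarrow>xs. \<Sum>q\<leftarrow>ys. h (mS (fst p) (fst q), mU (snd p) (snd q)) :: 'a::comm_monoid_add)"
  by (induct xs) (auto simp: tprod_def sum_list_concat case_prod_beta o_def)

lemma sum_list_tneg: "(\<Sum>p\<leftarrow>tneg xs. h p) = (\<Sum>p\<leftarrow>xs. h (- fst p, snd p) :: 'a::comm_monoid_add)"
  by (induct xs) (auto simp: tneg_def case_prod_beta)

definition tjacobi :: "('s::ab_group_add \<Rightarrow> 's \<Rightarrow> 's) \<Rightarrow> ('u \<Rightarrow> 'u \<Rightarrow> 'u)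
    \<Rightarrow> ('s \<times> 'u) list \<Rightarrow> ('s \<times> 'u) list \<Rightarrow> ('s \<times> 'u) list \<Rightarrow> ('s \<times> 'u) list" where
  "tjacobi mS mU xs ys zs =
     tcomm mS mU (tcomm mS mU xs ys) zs @ tcomm mS mU (tcomm mS mU ys zs) xs @
     tcomm mS mU (tcomm mS mU zs xs) ys"

lemma tensor_Lie_admissible_iff:
  "tensor_Lie_admissible scS mS scU mU \<longleftrightarrow>
     (\<forall>\<beta> xs ys zs. bilinear_form scS scU \<beta> \<longrightarrow> (\<Sum>(s, u)\<leftarrow>tjacobi mS mU xs ys zs. \<beta> s u) = 0)"
  unfolding tensor_Lie_admissible_def tensor_zero_def tjacobi_def by blast

lemma sum_list_tjacobi_trilinear:
  assumes "is_algebra scS mS" "bilinear_form scS scU \<beta>"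
  shows "(\<Sum>(s, u)\<leftarrow>tjacobi mS mU xs ys zs. \<beta> s u) =
    (\<Sum>p\<leftarrow>xs. \<Sum>q\<leftarrow>ys. \<Sum>r\<leftarrow>zs. \<Sum>(s, u)\<leftarrow>tjacobi mS mU [p] [q] [r]. \<beta> s u)"
  unfolding case_prod_beta
  by (simp add: tjacobi_def tcomm_def sum_list_tprod sum_list_tneg sum_list_addf sum_list_subtractf
      sum_list_uminus additive.minus[OF is_algebra_additive(1)[OF assms(1)]]
      additive.minus[OF is_algebra_additive(2)[OF assms(1)]]
      additive.minus[OF bilinear_form_additive(2)[OF assms(2)]]
      sum_list_swap[where xs=ys and ys=xs] sum_list_swap[where xs=zs and ys=xs]
      sum_list_swap[where xs=zs and ys=ys] algebra_simps)

lemma sum_list_tjacobi_pure_tensors: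
  assumes S: "is_algebra scS mS" "LS_A2 mS"
    and U: "is_algebra scU mU" "alternative mU" "left_comm_id mU"
    and \<beta>: "bilinear_form scS scU \<beta>"
  shows "(\<Sum>(s, x)\<leftarrow>tjacobi mS mU [(a, u)] [(b, v)] [(c, w)]. \<beta> s x) = 0"
proof -
  let ?J = "\<lambda>x y z p q r. \<beta> (mS (mS x y) z) (mU (mU p q) r) - \<beta> (mS x (mS y z)) (mU p (mU q r))"
  let ?A = "assoc mU u v w"
  note S_add = is_algebra_additive[OF S(1)] and U_add = is_algebra_additive[OF U(1)]
    and \<beta>_add = bilinear_form_additive[OF \<beta>]
  have U_assoc: "assoc mU v u w = - ?A" "assoc mU u w v = - ?A" "assoc mU w v u = - ?A"
    "assoc mU v w u = ?A" "assoc mU w u v = ?A"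
    using alternative_assoc_antisym[OF U_add U(2)] by metis+
  have "(\<Sum>(s, x)\<leftarrow>tjacobi mS mU [(a, u)] [(b, v)] [(c, w)]. \<beta> s x) =
      ?J a b c u v w - ?J b a c v u w + ?J b c a v w u - ?J c b a w v u + ?J c a b w u v - ?J a c b u w v"
    by (simp add: tjacobi_def tcomm_def tprod_def tneg_def additive.minus[OF S_add(1)]
        additive.minus[OF S_add(2)] additive.minus[OF \<beta>_add(2)])
  also have "\<dots> = (\<beta> (assoc mS a b c) (mU (mU u v) w) - \<beta> (assoc mS b a c) (mU (mU v u) w))
      + (\<beta> (assoc mS b c a) (mU (mU v w) u) - \<beta> (assoc mS c b a) (mU (mU w v) u))
      + (\<beta> (assoc mS c a b) (mU (mU w u) v) - \<beta> (assoc mS a c b) (mU (mU u w) v))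
      + \<beta> (mS a (mS b c) + mS b (mS a c) + mS a (mS c b) + mS c (mS a b) + mS b (mS c a)
           + mS c (mS b a)) ?A"
    by (simp add: biadditive_assoc_split[OF \<beta>_add] U_assoc additive.minus[OF \<beta>_add(1)]
        additive.add[OF \<beta>_add(2)])
  also have "\<dots> = 0"
    using S(2) U(3) additive.zero[OF \<beta>_add(2)]
    unfolding LS_A2_def left_symmetric_def A2_identity_def left_comm_id_def by simp
  finally show ?thesis .
qed

lemma tensor_Lie_admissible_if_alternative_left_comm:
  assumes "is_algebra scS mS" "LS_A2 mS" "is_algebra scU mU" "alternative mU" "left_comm_id mU"
  shows "tensor_Lie_admissible scS mS scU mU"
  unfolding tensor_Lie_admissible_iff
proof (intro allI impI)
  fix \<beta> xs ys zs
  assume \<beta>: "bilinear_form scS scU \<beta>"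
  have "(\<Sum>(s, x)\<leftarrow>tjacobi mS mU [p] [q] [r]. \<beta> s x) = 0" for p q r
    using sum_list_tjacobi_pure_tensors[OF assms \<beta>, of "fst p" "snd p" "fst q" "snd q" "fst r" "snd r"]
    by simp
  then show "(\<Sum>(s, x)\<leftarrow>tjacobi mS mU xs ys zs. \<beta> s x) = 0"
    using sum_list_tjacobi_trilinear[OF assms(1) \<beta>, of mU xs ys zs] by simp
qed

lemma eq_if_linear_functionals_agree:
  fixes sc :: "'k::field \<Rightarrow> 'u::ab_group_add \<Rightarrow> 'u"
  assumes "vector_space sc" "\<And>\<phi>. Vector_Spaces.linear sc (*) \<phi> \<Longrightarrow> \<phi> x = \<phi> y"
  shows "x = y"
proof (rule ccontr)
  assume "x \<noteq> y"
  have "vector_space ((*) :: 'k \<Rightarrow> 'k \<Rightarrow> 'k)"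
    by unfold_locales (simp_all add: algebra_simps)
  then interpret vector_space_pair sc "(*) :: 'k \<Rightarrow> 'k \<Rightarrow> 'k"
    using assms(1) by (simp add: vector_space_pair_def)
  have "vs1.independent {x - y}"
    using \<open>x \<noteq> y\<close> by (intro vs1.independent_insertI) (auto simp: vs1.independent_empty)
  then obtain \<phi> where \<phi>: "Vector_Spaces.linear sc (*) \<phi>" "\<phi> (x - y) = 1"
    using linear_independent_extend[of "{x - y}" "\<lambda>_. 1"] by auto
  moreover have "\<phi> (x - y) = \<phi> x - \<phi> y"
    using \<phi>(1) by (rule module_hom.diff[OF module_hom_linearI])
  ultimately show False
    using assms(2)[OF \<phi>(1)] by simp
qed

definition scale_seq :: "'k::field \<Rightarrow> (nat \<Rightarrow> 'k) \<Rightarrow> (nat \<Rightarrow> 'k)" where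
  "scale_seq c f = (\<lambda>n. c * f n)"

definition basis_seq :: "nat \<Rightarrow> nat \<Rightarrow> 'k::field" where
  "basis_seq i = (\<lambda>n. if n = i then 1 else 0)"

lemma vector_space_scale_seq: "vector_space scale_seq"
  by unfold_locales (auto simp: scale_seq_def fun_eq_iff algebra_simps)

lemma sum_list_tjacobi_coordinate:
  assumes "tensor_Lie_admissible scale_seq M scU mU" "Vector_Spaces.linear scU (*) \<phi>"
  shows "(\<Sum>(s, x)\<leftarrow>tjacobi M mU xs ys zs. s n * \<phi> x) = 0"
proof -
  have "bilinear_form scale_seq scU (\<lambda>s x. s n * \<phi> x)"
    using assms(2) unfolding bilinear_form_def linear_iff scale_seq_def by (simp add: algebra_simps)
  with assms(1) show ?thesis unfolding tensor_Lie_admissible_iff by blast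
qed

definition witness_left_comm :: "(nat \<Rightarrow> 'k::field) \<Rightarrow> (nat \<Rightarrow> 'k) \<Rightarrow> (nat \<Rightarrow> 'k)" where
  "witness_left_comm x y = (\<lambda>n. if n = 3 then x 0 * y 1 + x 1 * y 0 else if n = 6 then x 3 * y 2 else 0)"

definition witness_left_alt :: "(nat \<Rightarrow> 'k::field) \<Rightarrow> (nat \<Rightarrow> 'k) \<Rightarrow> (nat \<Rightarrow> 'k)" where
  "witness_left_alt x y = (\<lambda>n. if n = 5 then x 0 * y 1 - x 1 * y 0 else if n = 3 then x 1 * y 2
     else if n = 4 then x 0 * y 2 else if n = 6 then x 0 * y 3 - x 1 * y 4 + x 5 * y 2 else 0)"

definition witness_right_alt :: "(nat \<Rightarrow> 'k::field) \<Rightarrow> (nat \<Rightarrow> 'k) \<Rightarrow> (nat \<Rightarrow> 'k)" where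
  "witness_right_alt x y = (\<lambda>n. if n = 5 then x 0 * y 1 else if n = 4 then x 0 * y 2
     else if n = 3 then x 1 * y 2 - x 2 * y 1 else if n = 6 then x 5 * y 2 - x 4 * y 1 + x 0 * y 3 else 0)"

lemma witness_left_comm_LS_A2: "is_algebra scale_seq witness_left_comm" "LS_A2 witness_left_comm"
  unfolding is_algebra_def LS_A2_def left_symmetric_def A2_identity_def assoc_def
  by (auto simp: vector_space_scale_seq witness_left_comm_def scale_seq_def fun_eq_iff algebra_simps)

lemma witness_left_alt_LS_A2: "is_algebra scale_seq witness_left_alt" "LS_A2 witness_left_alt"
  unfolding is_algebra_def LS_A2_def left_symmetric_def A2_identity_def assoc_def
  by (auto simp: vector_space_scale_seq witness_left_alt_def scale_seq_def fun_eq_iff algebra_simps)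

lemma witness_right_alt_LS_A2: "is_algebra scale_seq witness_right_alt" "LS_A2 witness_right_alt"
  unfolding is_algebra_def LS_A2_def left_symmetric_def A2_identity_def assoc_def
  by (auto simp: vector_space_scale_seq witness_right_alt_def scale_seq_def fun_eq_iff algebra_simps)

lemma left_comm_id_if_tensor_Lie_admissible:
  fixes scU :: "'k::field \<Rightarrow> 'u::ab_group_add \<Rightarrow> 'u"
  assumes "vector_space scU" "tensor_Lie_admissible scale_seq witness_left_comm scU mU"
  shows "left_comm_id mU"
  unfolding left_comm_id_def
proof (intro allI eq_if_linear_functionals_agree[OF assms(1)])
  fix u v w and \<phi> :: "'u \<Rightarrow> 'k"
  assume "Vector_Spaces.linear scU (*) \<phi>"
  from sum_list_tjacobi_coordinate[OF assms(2) this,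
      of 6 "[(basis_seq 0, u)]" "[(basis_seq 1, v)]" "[(basis_seq 2, w)]"]
  show "\<phi> (mU (mU u v) w) = \<phi> (mU (mU v u) w)"
    by (simp add: tjacobi_def tcomm_def tprod_def tneg_def witness_left_comm_def basis_seq_def)
qed

lemma alternative_if_tensor_Lie_admissible:
  fixes scU :: "'k::field_char_0 \<Rightarrow> 'u::ab_group_add \<Rightarrow> 'u"
  assumes "vector_space scU"
    and left: "tensor_Lie_admissible scale_seq witness_left_alt scU mU"
    and right: "tensor_Lie_admissible scale_seq witness_right_alt scU mU"
  shows "alternative mU"
  unfolding alternative_def assoc_def right_minus_eq
proof (intro allI conjI eq_if_linear_functionals_agree[OF assms(1)])
  fix a b and \<phi> :: "'u \<Rightarrow> 'k"
  assume \<phi>: "Vector_Spaces.linear scU (*) \<phi>"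
  from sum_list_tjacobi_coordinate[OF left \<phi>,
      of 6 "[(basis_seq 0, a)]" "[(basis_seq 1, a)]" "[(basis_seq 2, b)]"]
  show "\<phi> (mU (mU a a) b) = \<phi> (mU a (mU a b))"
    by (simp add: tjacobi_def tcomm_def tprod_def tneg_def witness_left_alt_def basis_seq_def)
  from sum_list_tjacobi_coordinate[OF right \<phi>,
      of 6 "[(basis_seq 0, a)]" "[(basis_seq 1, b)]" "[(basis_seq 2, b)]"]
  show "\<phi> (mU (mU a b) b) = \<phi> (mU a (mU b b))"
    by (simp add: tjacobi_def tcomm_def tprod_def tneg_def witness_right_alt_def basis_seq_def)
qed

theorem mainTheorem5:
  fixes scU :: "'k::field_char_0 \<Rightarrow> 'u::ab_group_add \<Rightarrow> 'u"
    and mU :: "'u \<Rightarrow> 'u \<Rightarrow> 'u"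
  assumes "is_algebra scU mU"
  shows "((alternative mU \<and> left_comm_id mU) \<longrightarrow>
            (\<forall>(scS :: 'k \<Rightarrow> 's::ab_group_add \<Rightarrow> 's) mS.
               is_algebra scS mS \<and> LS_A2 mS \<longrightarrow> tensor_Lie_admissible scS mS scU mU))
       \<and> ((\<forall>(scS :: 'k \<Rightarrow> (nat \<Rightarrow> 'k) \<Rightarrow> (nat \<Rightarrow> 'k)) mS.
               is_algebra scS mS \<and> LS_A2 mS \<longrightarrow> tensor_Lie_admissible scS mS scU mU)
            \<longrightarrow> (alternative mU \<and> left_comm_id mU))"
proof (intro conjI impI allI)
  fix scS :: "'k \<Rightarrow> 's \<Rightarrow> 's" and mS
  assume "alternative mU \<and> left_comm_id mU" "is_algebra scS mS \<and> LS_A2 mS"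
  then show "tensor_Lie_admissible scS mS scU mU"
    using tensor_Lie_admissible_if_alternative_left_comm assms by blast
next
  assume admissible: "\<forall>(scS :: 'k \<Rightarrow> (nat \<Rightarrow> 'k) \<Rightarrow> (nat \<Rightarrow> 'k)) mS.
    is_algebra scS mS \<and> LS_A2 mS \<longrightarrow> tensor_Lie_admissible scS mS scU mU"
  have "vector_space scU"
    using assms unfolding is_algebra_def by blast
  then show "alternative mU" "left_comm_id mU"
    using alternative_if_tensor_Lie_admissible left_comm_id_if_tensor_Lie_admissible
      admissible witness_left_alt_LS_A2 witness_right_alt_LS_A2 witness_left_comm_LS_A2 by blast+
qed

end
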